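(* Let $X$ be a paracompact $\sigma$-space and let $(\lambda_i)_{i\ge1}$ be a sequence of open locally finite covers of $X$ with $\lambda_{i+1}\succ\lambda_i$ for all $i$. Then there exist a sequence $(\omega_i^\circ)_{i\ge1}$ of open locally finite covers of $X$ with $\omega_i^\circ\succ\lambda_i$ and $\omega^\circ_{i+1}\succ\omega^\circ_i$ for all $i$, a metric space $Z$, and a continuous bijection $\psi\colon X\to Z$ such that $\psi(\omega_i^\circ)=\{\psi(G):G\in\omega_i^\circ\}$ is an open locally finite cover of $Z$ for every $i$.
   Context: A $\sigma$-space is a regular $T_1$ space with a $\sigma$-discrete network (a network being a family $\mu$ such that for every $x$ and neighborhood $Ox$ there is $F\in\mu$ with $x\in F\subseteq Ox$). For covers $\omega,\lambda$, $\omega\succ\lambda$ means $\omega$ refines $\lambda$. *)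

theory Defs
  imports "HOL-Analysis.Analysis"
begin

definition open_cover_of :: "'a topology \<Rightarrow> 'a set set \<Rightarrow> bool" where
  "open_cover_of X \<U> \<longleftrightarrow> (\<forall>U\<in>\<U>. openin X U) \<and> \<Union>\<U> = topspace X"

definition refines :: "'a set set \<Rightarrow> 'a set set \<Rightarrow> bool" where
  "refines \<omega> L \<longleftrightarrow> (\<forall>A\<in>\<omega>. \<exists>B\<in>L. A \<subseteq> B)"

definition paracompact_space :: "'a topology \<Rightarrow> bool" where
  "paracompact_space X \<longleftrightarrow> Hausdorff_space X \<and>
     (\<forall>\<U>. open_cover_of X \<U> \<longrightarrow>
        (\<exists>\<V>. open_cover_of X \<V> \<and> locally_finite_in X \<V> \<and> refines \<V> \<U>))"

definition discrete_family_in :: "'a topology \<Rightarrow> 'a set set \<Rightarrow> bool" where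
  "discrete_family_in X \<A> \<longleftrightarrow>
     (\<forall>x\<in>topspace X. \<exists>V. openin X V \<and> x \<in> V \<and>
        (\<forall>A\<in>\<A>. \<forall>B\<in>\<A>. A \<inter> V \<noteq> {} \<and> B \<inter> V \<noteq> {} \<longrightarrow> A = B))"

definition sigma_discrete_in :: "'a topology \<Rightarrow> 'a set set \<Rightarrow> bool" where
  "sigma_discrete_in X \<mu> \<longleftrightarrow>
     (\<exists>f :: nat \<Rightarrow> 'a set set. (\<forall>n. discrete_family_in X (f n)) \<and> \<mu> = (\<Union>n. f n))"

definition network_of :: "'a topology \<Rightarrow> 'a set set \<Rightarrow> bool" where
  "network_of X \<mu> \<longleftrightarrow>
     (\<forall>x W. openin X W \<and> x \<in> W \<longrightarrow> (\<exists>F\<in>\<mu>. x \<in> F \<and> F \<subseteq> W))"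

definition sigma_space :: "'a topology \<Rightarrow> bool" where
  "sigma_space X \<longleftrightarrow> regular_space X \<and> t1_space X \<and>
     (\<exists>\<mu>. network_of X \<mu> \<and> sigma_discrete_in X \<mu>)"

end

theory Submission
  imports Defs
begin

text \<open>A paracompact regular space is normal, so an open cover \<open>\<U>\<close> has a locally finite open
  refinement \<open>\<V>\<close> with a dominated family of Urysohn functions \<open>h\<^sub>V\<close>. The supremum of the
  \<open>|h\<^sub>V x - h\<^sub>V y|\<close> is a continuous pseudometric for which the sets \<open>{h\<^sub>V > 1/2}\<close> form a
  refinement of \<open>\<U>\<close> that is open and locally finite also with respect to the pseudometric.
  Applied recursively to \<open>\<omega>\<^sub>i \<and> \<lambda>\<^sub>i\<^sub>+\<^sub>1\<close> this yields the chain \<open>\<omega>\<^sub>i\<close>; applied to the countably many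
  open covers that separate points, built from the closures of the \<open>\<sigma>\<close>-discrete network, it yields
  pseudometrics separating points. The weighted supremum \<open>sup\<^sub>j p\<^sub>j / 2\<^sup>j\<close> of all these
  pseudometrics is a metric on the points of \<open>X\<close> whose topology is coarser than that of \<open>X\<close>
  but still makes every \<open>\<omega>\<^sub>i\<close> an open locally finite cover; \<open>\<psi>\<close> is the identity.\<close>

section \<open>Paracompact regular spaces\<close>

lemma refines_trans: "refines \<A> \<B> \<Longrightarrow> refines \<B> \<C> \<Longrightarrow> refines \<A> \<C>"
  unfolding refines_def by (meson order_trans)

lemma regular_space_closure_of_subset:
  assumes "regular_space X" "openin X W" "x \<in> W"
  obtains U where "openin X U" "x \<in> U" "X closure_of U \<subseteq> W"
proof -
  have "closedin X (topspace X - W)" "x \<in> topspace X - (topspace X - W)"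
    using assms openin_subset by fastforce+
  then obtain U where "openin X U" "x \<in> U" "disjnt (topspace X - W) (X closure_of U)"
    using assms(1) unfolding regular_space by blast
  moreover from this(3) closure_of_subset_topspace[of X U] have "X closure_of U \<subseteq> W"
    by (auto simp: disjnt_def)
  ultimately show ?thesis using that by blast
qed

lemma locally_finite_in_point_finite:
  assumes "locally_finite_in X \<A>" "x \<in> topspace X"
  shows "finite {A\<in>\<A>. x \<in> A}"
proof -
  obtain N where "x \<in> N" and fin: "finite {A \<in> \<A>. A \<inter> N \<noteq> {}}"
    using assms unfolding locally_finite_in_def by blast
  then have "{A\<in>\<A>. x \<in> A} \<subseteq> {A \<in> \<A>. A \<inter> N \<noteq> {}}" by blast
  from this fin show ?thesis by (rule finite_subset)
qed

lemma finite_Ball_neighbourhood: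
  assumes "finite S" "x \<in> topspace X"
    and "\<And>s. s \<in> S \<Longrightarrow> \<exists>N. openin X N \<and> x \<in> N \<and> (\<forall>z\<in>N. P s z)"
  obtains N where "openin X N" "x \<in> N" "\<And>s z. s \<in> S \<Longrightarrow> z \<in> N \<Longrightarrow> P s z"
proof -
  from assms have "\<exists>N. openin X N \<and> x \<in> N \<and> (\<forall>s\<in>S. \<forall>z\<in>N. P s z)"
  proof (induction S rule: finite_induct)
    case empty
    then show ?case by (intro exI[of _ "topspace X"]) auto
  next
    case (insert a S)
    then obtain N1 N2 where "openin X N1" "x \<in> N1" "\<forall>s\<in>S. \<forall>z\<in>N1. P s z"
      and "openin X N2" "x \<in> N2" "\<forall>z\<in>N2. P a z"
      by (metis insertCI)
    then show ?case by (intro exI[of _ "N1 \<inter> N2"]) auto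
  qed
  then show ?thesis using that by blast
qed

lemma continuous_map_real_neighbourhood:
  assumes "continuous_map X euclideanreal f" "x \<in> topspace X" "e > 0"
  shows "\<exists>N. openin X N \<and> x \<in> N \<and> (\<forall>z\<in>N. \<bar>f z - f x\<bar> < e)"
  using assms openin_continuous_map_preimage[OF assms(1), of "ball (f x) e"]
  by (intro exI[of _ "{z \<in> topspace X. f z \<in> ball (f x) e}"]) (auto simp: dist_real_def)

lemma paracompact_closure_refinement:
  assumes par: "paracompact_space X" and reg: "regular_space X" and \<U>: "open_cover_of X \<U>"
  obtains \<V> where "open_cover_of X \<V>" "locally_finite_in X \<V>"
    "\<And>V. V \<in> \<V> \<Longrightarrow> \<exists>U\<in>\<U>. X closure_of V \<subseteq> U"
proof -
  define \<R> where "\<R> = {R. openin X R \<and> (\<exists>U\<in>\<U>. X closure_of R \<subseteq> U)}"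
  have "topspace X \<subseteq> \<Union>\<R>"
  proof
    fix x assume "x \<in> topspace X"
    then obtain U where "U \<in> \<U>" "openin X U" "x \<in> U" using \<U> unfolding open_cover_of_def by blast
    then obtain R where "openin X R" "x \<in> R" "X closure_of R \<subseteq> U"
      using regular_space_closure_of_subset[OF reg] by metis
    with \<open>U \<in> \<U>\<close> show "x \<in> \<Union>\<R>" unfolding \<R>_def by blast
  qed
  moreover have "\<Union>\<R> \<subseteq> topspace X" unfolding \<R>_def by (blast dest: openin_subset)
  ultimately have "open_cover_of X \<R>"
    unfolding open_cover_of_def \<R>_def by blast
  then obtain \<V> where \<V>: "open_cover_of X \<V>" "locally_finite_in X \<V>" "refines \<V> \<R>"
    using par unfolding paracompact_space_def by blast
  show thesis
  proof (rule that[OF \<V>(1,2)])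
    fix V assume "V \<in> \<V>"
    then obtain R where "R \<in> \<R>" "V \<subseteq> R" using \<V>(3) unfolding refines_def by blast
    then show "\<exists>U\<in>\<U>. X closure_of V \<subseteq> U" using closure_of_mono[of V R X] unfolding \<R>_def by blast
  qed
qed

lemma paracompact_regular_imp_normal_space:
  assumes par: "paracompact_space X" and reg: "regular_space X"
  shows "normal_space X"
  unfolding normal_space_def
proof clarify
  fix S T assume S: "closedin X S" and T: "closedin X T" and "disjnt S T"
  then have "open_cover_of X {topspace X - S, topspace X - T}"
    by (auto simp: open_cover_of_def disjnt_def)
  then obtain \<V> where \<V>: "open_cover_of X \<V>" "locally_finite_in X \<V>"
    and closure_\<V>: "\<And>V. V \<in> \<V> \<Longrightarrow> \<exists>U\<in>{topspace X - S, topspace X - T}. X closure_of V \<subseteq> U"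
    using paracompact_closure_refinement[OF par reg] by metis
  define \<V>S where "\<V>S = {V\<in>\<V>. V \<inter> S \<noteq> {}}"
  have open_\<V>: "openin X V" if "V \<in> \<V>" for V using \<V>(1) that by (auto simp: open_cover_of_def)
  have "X closure_of V \<inter> T = {}" if "V \<in> \<V>S" for V
  proof -
    have "\<not> X closure_of V \<subseteq> topspace X - S"
      using that closure_of_subset[OF openin_subset[OF open_\<V>]] by (auto simp: \<V>S_def)
    then show ?thesis using closure_\<V> that by (auto simp: \<V>S_def)
  qed
  moreover have "closedin X (\<Union>((\<lambda>V. X closure_of V) ` \<V>S))"
    by (rule closedin_Union_locally_finite_closure, rule locally_finite_in_subset[OF \<V>(2)])
      (auto simp: \<V>S_def)
  moreover have "\<Union>\<V>S \<subseteq> \<Union>((\<lambda>V. X closure_of V) ` \<V>S)"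
    using closure_of_subset[OF openin_subset[OF open_\<V>]] by (auto simp: \<V>S_def)
  moreover have "S \<subseteq> \<Union>\<V>S"
    using \<V>(1) closedin_subset[OF S] unfolding open_cover_of_def \<V>S_def by blast
  moreover have "openin X (\<Union>\<V>S)" using open_\<V> by (auto simp: \<V>S_def)
  ultimately show "\<exists>U V. openin X U \<and> openin X V \<and> S \<subseteq> U \<and> T \<subseteq> V \<and> disjnt U V"
    using closedin_subset[OF T]
    by (intro exI[of _ "\<Union>\<V>S"] exI[of _ "topspace X - \<Union>((\<lambda>V. X closure_of V) ` \<V>S)"])
       (auto simp: disjnt_def)
qed

lemma paracompact_closed_shrinking:
  assumes par: "paracompact_space X" and reg: "regular_space X" and \<V>: "open_cover_of X \<V>"
  obtains F where "\<And>V. closedin X (F V)" "\<And>V. F V \<subseteq> V"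
    "\<And>x. x \<in> topspace X \<Longrightarrow> \<exists>V\<in>\<V>. x \<in> F V"
proof -
  obtain \<Q> where \<Q>: "open_cover_of X \<Q>" "locally_finite_in X \<Q>"
    and closure_\<Q>: "\<And>Q. Q \<in> \<Q> \<Longrightarrow> \<exists>V\<in>\<V>. X closure_of Q \<subseteq> V"
    using paracompact_closure_refinement[OF par reg \<V>] by metis
  define F where "F V = \<Union>((\<lambda>Q. X closure_of Q) ` {Q\<in>\<Q>. X closure_of Q \<subseteq> V})" for V
  show thesis
  proof (rule that)
    fix V
    show "closedin X (F V)"
      unfolding F_def
      by (intro closedin_Union_locally_finite_closure locally_finite_in_subset[OF \<Q>(2)]) auto
    show "F V \<subseteq> V" by (auto simp: F_def)
  next
    fix x assume "x \<in> topspace X"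
    then obtain Q where "Q \<in> \<Q>" "x \<in> Q" using \<Q>(1) unfolding open_cover_of_def by blast
    moreover have "Q \<subseteq> X closure_of Q"
      using \<Q>(1) \<open>Q \<in> \<Q>\<close> by (intro closure_of_subset) (auto simp: open_cover_of_def openin_subset)
    ultimately show "\<exists>V\<in>\<V>. x \<in> F V" using closure_\<Q> unfolding F_def by blast
  qed
qed

lemma paracompact_Urysohn_family:
  assumes par: "paracompact_space X" and reg: "regular_space X" and \<V>: "open_cover_of X \<V>"
  obtains h :: "'a set \<Rightarrow> 'a \<Rightarrow> real"
  where "\<And>V. V \<in> \<V> \<Longrightarrow> continuous_map X euclideanreal (h V)" "\<And>V x. h V x \<in> {0..1}"
    "\<And>V x. V \<in> \<V> \<Longrightarrow> x \<in> topspace X \<Longrightarrow> x \<notin> V \<Longrightarrow> h V x = 0"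
    "\<And>x. x \<in> topspace X \<Longrightarrow> \<exists>V\<in>\<V>. h V x = 1"
proof -
  obtain F where F: "\<And>V. closedin X (F V)" "\<And>V. F V \<subseteq> V"
    "\<And>x. x \<in> topspace X \<Longrightarrow> \<exists>V\<in>\<V>. x \<in> F V"
    using paracompact_closed_shrinking[OF par reg \<V>] by metis
  have normal: "normal_space X" by (rule paracompact_regular_imp_normal_space[OF par reg])
  have "\<forall>V\<in>\<V>. \<exists>f. continuous_map X (top_of_set {0..1::real}) f \<and>
      f ` (topspace X - V) \<subseteq> {0} \<and> f ` F V \<subseteq> {1}"
  proof
    fix V assume "V \<in> \<V>"
    have "openin X V" using \<V> \<open>V \<in> \<V>\<close> by (simp add: open_cover_of_def)
    then have closed: "closedin X (topspace X - V)" by auto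
    have "disjnt (topspace X - V) (F V)" using F(2) by (auto simp: disjnt_def)
    then obtain g where "continuous_map X (top_of_set {0..1::real}) g"
      "g ` (topspace X - V) \<subseteq> {0}" "g ` F V \<subseteq> {1}"
      using Urysohn_lemma[OF normal closed F(1)[of V] _ zero_le_one] by blast
    then show "\<exists>f. continuous_map X (top_of_set {0..1::real}) f \<and>
        f ` (topspace X - V) \<subseteq> {0} \<and> f ` F V \<subseteq> {1}"
      by blast
  qed
  then obtain f where "\<forall>V\<in>\<V>. continuous_map X (top_of_set {0..1::real}) (f V) \<and>
      f V ` (topspace X - V) \<subseteq> {0} \<and> f V ` F V \<subseteq> {1}"
    by (auto dest!: bchoice)
  then have f: "\<And>V. V \<in> \<V> \<Longrightarrow> continuous_map X (top_of_set {0..1::real}) (f V)"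
    "\<And>V. V \<in> \<V> \<Longrightarrow> f V ` (topspace X - V) \<subseteq> {0}" "\<And>V. V \<in> \<V> \<Longrightarrow> f V ` F V \<subseteq> {1}"
    by blast+
  define h where "h V x = (if V \<in> \<V> \<and> x \<in> topspace X then f V x else 0)" for V x
  show thesis
  proof (rule that)
    fix V assume V: "V \<in> \<V>"
    have "continuous_map X euclideanreal (f V)" using f(1)[OF V] continuous_map_in_subtopology by blast
    then show "continuous_map X euclideanreal (h V)" by (rule continuous_map_eq) (simp add: h_def V)
  next
    fix V x
    show "h V x \<in> {0..1}"
      using f(1)[of V] unfolding h_def continuous_map_in_subtopology Pi_iff by auto
  next
    fix V x assume "V \<in> \<V>" "x \<in> topspace X" "x \<notin> V"
    then show "h V x = 0" using f(2)[of V] by (auto simp: h_def)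
  next
    fix x assume x: "x \<in> topspace X"
    then obtain V where "V \<in> \<V>" "x \<in> F V" using F(3) by blast
    then show "\<exists>V\<in>\<V>. h V x = 1" using f(3)[of V] x by (intro bexI[of _ V]) (auto simp: h_def)
  qed
qed

section \<open>Pseudometric refinements\<close>

definition pseudometric_le1 :: "('a \<Rightarrow> 'a \<Rightarrow> real) \<Rightarrow> bool" where
  "pseudometric_le1 \<rho> \<longleftrightarrow>
     (\<forall>x y. 0 \<le> \<rho> x y \<and> \<rho> x y \<le> 1 \<and> \<rho> x y = \<rho> y x) \<and> (\<forall>x. \<rho> x x = 0) \<and>
     (\<forall>x y z. \<rho> x z \<le> \<rho> x y + \<rho> y z)"

text \<open>Continuity on the diagonal suffices: with the triangle inequality it makes \<open>\<rho>\<close> continuous.\<close>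
definition continuous_pseudometric :: "'a topology \<Rightarrow> ('a \<Rightarrow> 'a \<Rightarrow> real) \<Rightarrow> bool" where
  "continuous_pseudometric X \<rho> \<longleftrightarrow> pseudometric_le1 \<rho> \<and>
     (\<forall>x\<in>topspace X. \<forall>e>0. \<exists>N. openin X N \<and> x \<in> N \<and> (\<forall>z\<in>N. \<rho> x z < e))"

text \<open>Inserting \<open>0\<close> keeps the supremum meaningful for an empty family.\<close>
definition sup_family :: "('i \<Rightarrow> 'a \<Rightarrow> 'a \<Rightarrow> real) \<Rightarrow> 'i set \<Rightarrow> 'a \<Rightarrow> 'a \<Rightarrow> real" where
  "sup_family d I x y = Sup (insert 0 ((\<lambda>i. d i x y) ` I))"

lemma sup_family_upper:
  assumes "\<And>i. i \<in> I \<Longrightarrow> d i x y \<le> 1" "i \<in> I"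
  shows "d i x y \<le> sup_family d I x y"
  unfolding sup_family_def using assms by (intro cSup_upper bdd_aboveI[of _ 1]) auto

lemma sup_family_nonneg:
  assumes "\<And>i. i \<in> I \<Longrightarrow> d i x y \<le> 1"
  shows "0 \<le> sup_family d I x y"
  unfolding sup_family_def using assms by (intro cSup_upper bdd_aboveI[of _ 1]) auto

lemma sup_family_least:
  assumes "\<And>i. i \<in> I \<Longrightarrow> d i x y \<le> c" "0 \<le> c"
  shows "sup_family d I x y \<le> c"
  unfolding sup_family_def using assms by (intro cSup_least) auto

lemma pseudometric_le1_sup_family:
  assumes d: "\<And>i. i \<in> I \<Longrightarrow> pseudometric_le1 (d i)"
  shows "pseudometric_le1 (sup_family d I)"
  unfolding pseudometric_le1_def
proof (intro conjI allI)
  have le1: "d i x y \<le> 1" if "i \<in> I" for i x y using d[OF that] by (simp add: pseudometric_le1_def)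
  have upper: "d i x y \<le> sup_family d I x y" if "i \<in> I" for i x y
    using sup_family_upper[of I d x y i] le1 that by blast
  have nonneg: "0 \<le> sup_family d I x y" for x y
    using sup_family_nonneg[of I d x y] le1 by blast
  fix x y z
  show "0 \<le> sup_family d I x y" by (rule nonneg)
  show "sup_family d I x y \<le> 1" using le1 by (intro sup_family_least) auto
  have "(\<lambda>i. d i x y) ` I = (\<lambda>i. d i y x) ` I"
    using d by (intro image_cong) (auto simp: pseudometric_le1_def)
  then show "sup_family d I x y = sup_family d I y x" by (simp add: sup_family_def)
  have "sup_family d I x x \<le> 0"
    using d by (intro sup_family_least) (auto simp: pseudometric_le1_def)
  with nonneg show "sup_family d I x x = 0" by (simp add: order_antisym)
  show "sup_family d I x z \<le> sup_family d I x y + sup_family d I y z"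
  proof (rule sup_family_least)
    fix i assume i: "i \<in> I"
    then have "d i x z \<le> d i x y + d i y z" using d by (simp add: pseudometric_le1_def)
    with upper[OF i, of x y] upper[OF i, of y z]
    show "d i x z \<le> sup_family d I x y + sup_family d I y z" by linarith
  qed (simp add: add_nonneg_nonneg nonneg)
qed

lemma continuous_pseudometric_sup_locally_finite:
  assumes lf: "locally_finite_in X \<V>"
    and cont: "\<And>V. V \<in> \<V> \<Longrightarrow> continuous_map X euclideanreal (h V)"
    and range: "\<And>V x. h V x \<in> {0..1}"
    and vanish: "\<And>V x. V \<in> \<V> \<Longrightarrow> x \<in> topspace X \<Longrightarrow> x \<notin> V \<Longrightarrow> h V x = 0"
  shows "continuous_pseudometric X (sup_family (\<lambda>V x y. \<bar>h V x - h V y\<bar>) \<V>)"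
  unfolding continuous_pseudometric_def
proof (intro conjI ballI allI impI)
  have le1: "\<bar>h V x - h V y\<bar> \<le> 1" for V x y using range[of V x] range[of V y] by auto
  show "pseudometric_le1 (sup_family (\<lambda>V x y. \<bar>h V x - h V y\<bar>) \<V>)"
    using le1 by (intro pseudometric_le1_sup_family) (auto simp: pseudometric_le1_def)
  fix x and e :: real
  assume x: "x \<in> topspace X" and e: "0 < e"
  obtain N0 where N0: "openin X N0" "x \<in> N0" "finite {V\<in>\<V>. V \<inter> N0 \<noteq> {}}"
    using lf x unfolding locally_finite_in_def by blast
  obtain N where N: "openin X N" "x \<in> N"
    and close: "\<And>V z. V \<in> {V\<in>\<V>. V \<inter> N0 \<noteq> {}} \<Longrightarrow> z \<in> N \<Longrightarrow> \<bar>h V z - h V x\<bar> < e/2"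
    using finite_Ball_neighbourhood[OF N0(3) x, of "\<lambda>V z. \<bar>h V z - h V x\<bar> < e/2"]
      continuous_map_real_neighbourhood[OF cont x] e
    by (metis (no_types, lifting) half_gt_zero mem_Collect_eq)
  show "\<exists>N. openin X N \<and> x \<in> N \<and> (\<forall>z\<in>N. sup_family (\<lambda>V x y. \<bar>h V x - h V y\<bar>) \<V> x z < e)"
  proof (intro exI conjI ballI)
    show "openin X (N0 \<inter> N)" "x \<in> N0 \<inter> N" using N0 N by auto
    fix z assume z: "z \<in> N0 \<inter> N"
    then have "z \<in> topspace X" using N0(1) openin_subset by blast
    have "\<bar>h V x - h V z\<bar> \<le> e/2" if "V \<in> \<V>" for V
    proof (cases "V \<inter> N0 = {}")
      case True
      then have "x \<notin> V" "z \<notin> V" using N0(2) z by auto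
      then show ?thesis using vanish[OF that x] vanish[OF that \<open>z \<in> topspace X\<close>] e by simp
    next
      case False
      then show ?thesis using close[of V z] that z by (simp add: abs_minus_commute)
    qed
    then have "sup_family (\<lambda>V x y. \<bar>h V x - h V y\<bar>) \<V> x z \<le> e/2"
      using e by (intro sup_family_least) auto
    then show "sup_family (\<lambda>V x y. \<bar>h V x - h V y\<bar>) \<V> x z < e" using e by linarith
  qed
qed

definition pseudo_open_in :: "'a set \<Rightarrow> ('a \<Rightarrow> 'a \<Rightarrow> real) \<Rightarrow> 'a set \<Rightarrow> bool" where
  "pseudo_open_in S \<rho> W \<longleftrightarrow> (\<forall>x\<in>W. \<exists>r>0. \<forall>y\<in>S. \<rho> x y < r \<longrightarrow> y \<in> W)"

definition pseudo_locally_finite_in :: "'a set \<Rightarrow> ('a \<Rightarrow> 'a \<Rightarrow> real) \<Rightarrow> 'a set set \<Rightarrow> bool" where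
  "pseudo_locally_finite_in S \<rho> \<W> \<longleftrightarrow> (\<forall>x\<in>S. \<exists>r>0. finite {W\<in>\<W>. \<exists>y\<in>S. \<rho> x y < r \<and> y \<in> W})"

text \<open>The pseudometric is what keeps \<open>\<W>\<close> open and locally finite in the final metric space.\<close>
definition pseudometric_refinement ::
    "'a topology \<Rightarrow> 'a set set \<Rightarrow> 'a set set \<Rightarrow> ('a \<Rightarrow> 'a \<Rightarrow> real) \<Rightarrow> bool" where
  "pseudometric_refinement X \<U> \<W> \<rho> \<longleftrightarrow>
     open_cover_of X \<W> \<and> locally_finite_in X \<W> \<and> refines \<W> \<U> \<and> continuous_pseudometric X \<rho> \<and>
     (\<forall>W\<in>\<W>. pseudo_open_in (topspace X) \<rho> W) \<and> pseudo_locally_finite_in (topspace X) \<rho> \<W>"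

lemma pseudo_open_in_superlevel:
  assumes "\<And>x y. \<bar>h x - h y\<bar> \<le> \<rho> x y"
  shows "pseudo_open_in S \<rho> {x\<in>S. c < h x}"
  unfolding pseudo_open_in_def
proof (intro ballI exI conjI allI impI)
  fix x assume "x \<in> {x\<in>S. c < h x}"
  then show "0 < h x - c" by simp
  fix y assume "y \<in> S" "\<rho> x y < h x - c"
  with assms[of x y] show "y \<in> {x\<in>S. c < h x}" by auto
qed

lemma pseudo_locally_finite_in_superlevels:
  assumes lf: "locally_finite_in X \<V>" and "0 < c"
    and lip: "\<And>V x y. V \<in> \<V> \<Longrightarrow> \<bar>h V x - h V y\<bar> \<le> \<rho> x y"
    and vanish: "\<And>V x. V \<in> \<V> \<Longrightarrow> x \<in> topspace X \<Longrightarrow> x \<notin> V \<Longrightarrow> h V x = 0"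
  shows "pseudo_locally_finite_in (topspace X) \<rho> ((\<lambda>V. {x\<in>topspace X. c < h V x}) ` \<V>)"
  unfolding pseudo_locally_finite_in_def
proof (intro ballI exI conjI)
  fix x assume x: "x \<in> topspace X"
  define W where "W V = {x\<in>topspace X. c < h V x}" for V
  text \<open>A \<open>\<rho>\<close>-ball of radius \<open>c\<close> around \<open>x\<close> meets \<open>W V\<close> only if \<open>h V x > 0\<close>, i.e. \<open>x \<in> V\<close>.\<close>
  have "{A \<in> W ` \<V>. \<exists>y\<in>topspace X. \<rho> x y < c \<and> y \<in> A} \<subseteq> W ` {V\<in>\<V>. x \<in> V}"
  proof clarify
    fix V y assume "V \<in> \<V>" "\<rho> x y < c" "y \<in> W V"
    with lip[of V x y] have "h V x \<noteq> 0" by (auto simp: W_def)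
    with \<open>V \<in> \<V>\<close> show "W V \<in> W ` {V\<in>\<V>. x \<in> V}" using vanish[OF _ x] by blast
  qed
  then show "finite {A \<in> W ` \<V>. \<exists>y\<in>topspace X. \<rho> x y < c \<and> y \<in> A}"
    by (rule finite_subset) (intro finite_imageI locally_finite_in_point_finite[OF lf x])
qed (use \<open>0 < c\<close> in simp)

lemma exists_pseudometric_refinement:
  assumes par: "paracompact_space X" and reg: "regular_space X" and \<U>: "open_cover_of X \<U>"
  shows "\<exists>\<W> \<rho>. pseudometric_refinement X \<U> \<W> \<rho>"
proof -
  obtain \<V> where \<V>: "open_cover_of X \<V>" "locally_finite_in X \<V>" "refines \<V> \<U>"
    using par \<U> unfolding paracompact_space_def by blast
  obtain h where cont: "\<And>V. V \<in> \<V> \<Longrightarrow> continuous_map X euclideanreal (h V)"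
    and range: "\<And>V x. h V x \<in> {0..1}"
    and vanish: "\<And>V x. V \<in> \<V> \<Longrightarrow> x \<in> topspace X \<Longrightarrow> x \<notin> V \<Longrightarrow> h V x = 0"
    and one: "\<And>x. x \<in> topspace X \<Longrightarrow> \<exists>V\<in>\<V>. h V x = 1"
    using paracompact_Urysohn_family[OF par reg \<V>(1)] by metis
  define \<rho> where "\<rho> = sup_family (\<lambda>V x y. \<bar>h V x - h V y\<bar>) \<V>"
  have lip: "\<bar>h V x - h V y\<bar> \<le> \<rho> x y" if "V \<in> \<V>" for V x y
  proof -
    have "\<bar>h V' x - h V' y\<bar> \<le> 1" for V' using range[of V' x] range[of V' y] by auto
    then show ?thesis unfolding \<rho>_def using that by (intro sup_family_upper)
  qed
  define W where "W V = {x \<in> topspace X. 1/2 < h V x}" for V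
  have W_subset: "W V \<subseteq> V" if "V \<in> \<V>" for V using vanish[OF that] by (force simp: W_def)
  have "topspace X \<subseteq> \<Union>(W ` \<V>)"
  proof
    fix x assume "x \<in> topspace X"
    with one obtain V where "V \<in> \<V>" "h V x = 1" by blast
    with \<open>x \<in> topspace X\<close> show "x \<in> \<Union>(W ` \<V>)" unfolding W_def by force
  qed
  then have "\<Union>(W ` \<V>) = topspace X" unfolding W_def by blast
  moreover have "openin X (W V)" if "V \<in> \<V>" for V
    using openin_continuous_map_preimage[OF cont[OF that], of "{1/2<..}"] by (simp add: W_def)
  ultimately have "open_cover_of X (W ` \<V>)" unfolding open_cover_of_def by blast
  moreover have "refines (W ` \<V>) \<U>"
    using \<V>(3) W_subset unfolding refines_def by (metis imageE order_trans)
  moreover have "continuous_pseudometric X \<rho>"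
    unfolding \<rho>_def by (rule continuous_pseudometric_sup_locally_finite[OF \<V>(2) cont range vanish])
  moreover have "pseudo_locally_finite_in (topspace X) \<rho> (W ` \<V>)"
    unfolding W_def by (rule pseudo_locally_finite_in_superlevels[OF \<V>(2) _ lip vanish]) auto
  moreover have "pseudo_open_in (topspace X) \<rho> A" if "A \<in> W ` \<V>" for A
  proof -
    from that obtain V where "V \<in> \<V>" "A = W V" by blast
    have "pseudo_open_in (topspace X) \<rho> (W V)"
      unfolding W_def by (intro pseudo_open_in_superlevel lip \<open>V \<in> \<V>\<close>)
    with \<open>A = W V\<close> show ?thesis by simp
  qed
  moreover have "locally_finite_in X (W ` \<V>)" by (rule locally_finite_in_refinement[OF \<V>(2) W_subset])
  ultimately show ?thesis unfolding pseudometric_refinement_def by blast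
qed

lemma pseudometric_refinement_separates:
  assumes "pseudometric_refinement X \<U> \<W> \<rho>" "x \<in> topspace X" "y \<in> topspace X"
    and "\<And>U. U \<in> \<U> \<Longrightarrow> x \<in> U \<Longrightarrow> y \<notin> U"
  shows "0 < \<rho> x y"
proof -
  obtain W where W: "W \<in> \<W>" "x \<in> W"
    using assms(1,2) unfolding pseudometric_refinement_def open_cover_of_def by blast
  then have "y \<notin> W" using assms(1,4) unfolding pseudometric_refinement_def refines_def by blast
  obtain r where "r > 0" "\<forall>z\<in>topspace X. \<rho> x z < r \<longrightarrow> z \<in> W"
    using assms(1) W unfolding pseudometric_refinement_def pseudo_open_in_def by blast
  with \<open>y \<notin> W\<close> assms(3) show ?thesis by force
qed

section \<open>Open covers separating points\<close>

lemma discrete_family_in_neighbourhood: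
  "discrete_family_in X \<A> \<Longrightarrow> x \<in> topspace X \<Longrightarrow>
    \<exists>V. openin X V \<and> x \<in> V \<and> (\<forall>A\<in>\<A>. \<forall>B\<in>\<A>. A \<inter> V \<noteq> {} \<and> B \<inter> V \<noteq> {} \<longrightarrow> A = B)"
  unfolding discrete_family_in_def by (rule bspec)

lemma discrete_family_in_closure:
  assumes "discrete_family_in X \<A>"
  shows "discrete_family_in X ((\<lambda>A. X closure_of A) ` \<A>)"
  unfolding discrete_family_in_def
proof
  fix x assume "x \<in> topspace X"
  from discrete_family_in_neighbourhood[OF assms this] obtain V where V: "openin X V" "x \<in> V"
    and one: "\<forall>A\<in>\<A>. \<forall>B\<in>\<A>. A \<inter> V \<noteq> {} \<and> B \<inter> V \<noteq> {} \<longrightarrow> A = B"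
    by blast
  have meets: "A \<inter> V \<noteq> {}" if "X closure_of A \<inter> V \<noteq> {}" for A
    using openin_Int_closure_of_eq_empty[OF V(1), of A] that by (simp add: Int_commute)
  have "\<forall>C\<in>(\<lambda>A. X closure_of A) ` \<A>. \<forall>D\<in>(\<lambda>A. X closure_of A) ` \<A>.
      C \<inter> V \<noteq> {} \<and> D \<inter> V \<noteq> {} \<longrightarrow> C = D"
  proof (intro ballI impI)
    fix C D assume "C \<in> (\<lambda>A. X closure_of A) ` \<A>" "D \<in> (\<lambda>A. X closure_of A) ` \<A>"
      and CD: "C \<inter> V \<noteq> {} \<and> D \<inter> V \<noteq> {}"
    then obtain A B where AB: "A \<in> \<A>" "B \<in> \<A>" "C = X closure_of A" "D = X closure_of B" by blast
    with CD have "A = B" using one meets by metis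
    with AB show "C = D" by simp
  qed
  with V show "\<exists>V. openin X V \<and> x \<in> V \<and> (\<forall>C\<in>(\<lambda>A. X closure_of A) ` \<A>.
      \<forall>D\<in>(\<lambda>A. X closure_of A) ` \<A>. C \<inter> V \<noteq> {} \<and> D \<inter> V \<noteq> {} \<longrightarrow> C = D)"
    by blast
qed

lemma discrete_family_in_imp_locally_finite_in:
  assumes "discrete_family_in X \<A>" "\<Union>\<A> \<subseteq> topspace X"
  shows "locally_finite_in X \<A>"
  unfolding locally_finite_in_def
proof (intro conjI ballI)
  fix x assume "x \<in> topspace X"
  from discrete_family_in_neighbourhood[OF assms(1) this] obtain V where V: "openin X V" "x \<in> V"
    and one: "\<forall>A\<in>\<A>. \<forall>B\<in>\<A>. A \<inter> V \<noteq> {} \<and> B \<inter> V \<noteq> {} \<longrightarrow> A = B"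
    by blast
  have "finite {A \<in> \<A>. A \<inter> V \<noteq> {}}"
  proof (cases "{A \<in> \<A>. A \<inter> V \<noteq> {}} = {}")
    case False
    then obtain A where "A \<in> \<A>" "A \<inter> V \<noteq> {}" by blast
    then have "{A \<in> \<A>. A \<inter> V \<noteq> {}} \<subseteq> {A}" using one by blast
    then show ?thesis using finite_subset by blast
  qed (simp only: finite.emptyI)
  with V show "\<exists>V. openin X V \<and> x \<in> V \<and> finite {A \<in> \<A>. A \<inter> V \<noteq> {}}" by blast
qed (use assms in simp)

lemma discrete_family_in_imp_pairwise_disjnt:
  assumes "discrete_family_in X \<A>" "\<Union>\<A> \<subseteq> topspace X"
  shows "pairwise disjnt \<A>"
  unfolding pairwise_def disjnt_def
proof (intro ballI impI)
  fix A B assume "A \<in> \<A>" "B \<in> \<A>" "A \<noteq> B"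
  show "A \<inter> B = {}"
  proof (rule ccontr)
    assume "A \<inter> B \<noteq> {}"
    then obtain z where "z \<in> A" "z \<in> B" by blast
    then have "z \<in> topspace X" using assms(2) \<open>A \<in> \<A>\<close> by blast
    from discrete_family_in_neighbourhood[OF assms(1) this] obtain V
      where "z \<in> V" "\<forall>A\<in>\<A>. \<forall>B\<in>\<A>. A \<inter> V \<noteq> {} \<and> B \<inter> V \<noteq> {} \<longrightarrow> A = B"
      by blast
    with \<open>z \<in> A\<close> \<open>z \<in> B\<close> \<open>A \<in> \<A>\<close> \<open>B \<in> \<A>\<close> \<open>A \<noteq> B\<close> show False by blast
  qed
qed

definition separating_cover :: "'a topology \<Rightarrow> 'a set set \<Rightarrow> 'a set set \<Rightarrow> 'a set set" where
  "separating_cover X \<A> \<B> = insert (topspace X - \<Union>\<A>)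
      ((\<lambda>A. topspace X - \<Union>(\<A> - {A}) - \<Union>{B\<in>\<B>. B \<inter> A = {}}) ` \<A>)"

lemma open_cover_of_separating_cover:
  assumes \<A>: "locally_finite_in X \<A>" "pairwise disjnt \<A>" "\<And>A. A \<in> \<A> \<Longrightarrow> closedin X A"
    and \<B>: "locally_finite_in X \<B>" "\<And>B. B \<in> \<B> \<Longrightarrow> closedin X B"
  shows "open_cover_of X (separating_cover X \<A> \<B>)"
  unfolding open_cover_of_def
proof
  have closed_\<A>: "closedin X (\<Union>\<A>')" if "\<A>' \<subseteq> \<A>" for \<A>'
    using \<A> locally_finite_in_subset[OF \<A>(1) that] that by (intro closedin_locally_finite_Union) auto
  have closed_\<B>: "closedin X (\<Union>\<B>')" if "\<B>' \<subseteq> \<B>" for \<B>'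
    using \<B> locally_finite_in_subset[OF \<B>(1) that] that by (intro closedin_locally_finite_Union) auto
  have "openin X (topspace X - \<Union>(\<A> - {A}) - \<Union>{B\<in>\<B>. B \<inter> A = {}})" for A
    by (intro openin_diff openin_topspace closed_\<A> closed_\<B>) auto
  moreover have "openin X (topspace X - \<Union>\<A>)" by (intro openin_diff openin_topspace closed_\<A>) simp
  ultimately show "\<forall>U\<in>separating_cover X \<A> \<B>. openin X U"
    unfolding separating_cover_def by blast
  have "topspace X \<subseteq> \<Union>(separating_cover X \<A> \<B>)"
  proof
    fix z assume z: "z \<in> topspace X"
    show "z \<in> \<Union>(separating_cover X \<A> \<B>)"
    proof (cases "z \<in> \<Union>\<A>")
      case True
      then obtain A where "A \<in> \<A>" "z \<in> A" by blast
      with \<A>(2) have "z \<notin> \<Union>(\<A> - {A})" unfolding pairwise_def disjnt_def by blast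
      with z \<open>z \<in> A\<close> have "z \<in> topspace X - \<Union>(\<A> - {A}) - \<Union>{B\<in>\<B>. B \<inter> A = {}}" by blast
      moreover have "topspace X - \<Union>(\<A> - {A}) - \<Union>{B\<in>\<B>. B \<inter> A = {}} \<in> separating_cover X \<A> \<B>"
        unfolding separating_cover_def using \<open>A \<in> \<A>\<close> by (intro insertI2 imageI)
      ultimately show ?thesis by blast
    next
      case False
      with z show ?thesis unfolding separating_cover_def by blast
    qed
  qed
  then show "\<Union>(separating_cover X \<A> \<B>) = topspace X" unfolding separating_cover_def by blast
qed

lemma separating_cover_separates:
  assumes "A \<in> \<A>" "B \<in> \<B>" "A \<inter> B = {}" "x \<in> A" "y \<in> B"
    and "U \<in> separating_cover X \<A> \<B>" "x \<in> U"
  shows "y \<notin> U"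
proof -
  from assms(6) consider "U = topspace X - \<Union>\<A>"
    | A' where "A' \<in> \<A>" "U = topspace X - \<Union>(\<A> - {A'}) - \<Union>{B\<in>\<B>. B \<inter> A' = {}}"
    unfolding separating_cover_def by blast
  then show ?thesis
  proof cases
    case 1
    with assms(1,4,7) show ?thesis by blast
  next
    case (2 A')
    with assms(1,4,7) have "A' = A" by blast
    with 2 assms(2,3,5) show ?thesis by blast
  qed
qed

lemma regular_t1_network_separation:
  assumes reg: "regular_space X" and t1: "t1_space X" and net: "network_of X \<mu>"
    and x: "x \<in> topspace X" and y: "y \<in> topspace X" and "x \<noteq> y"
  obtains F F' where "F \<in> \<mu>" "F' \<in> \<mu>" "x \<in> X closure_of F" "y \<in> X closure_of F'"
    "X closure_of F \<inter> X closure_of F' = {}"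
proof -
  have point_in_closure: "z \<in> X closure_of F" if "z \<in> F" "F \<subseteq> V" "openin X V" for z F V
    using that closure_of_subset[OF subset_trans[OF that(2) openin_subset[OF that(3)]]] by blast
  obtain U where "openin X U" "x \<in> U" "y \<notin> U" using t1 x y \<open>x \<noteq> y\<close> unfolding t1_space_def by blast
  then obtain V where V: "openin X V" "x \<in> V" "X closure_of V \<subseteq> U"
    using regular_space_closure_of_subset[OF reg] by metis
  then obtain F where F: "F \<in> \<mu>" "x \<in> F" "F \<subseteq> V" using net unfolding network_of_def by blast
  have "X closure_of F \<subseteq> U" using closure_of_mono[OF F(3)] V(3) by blast
  with \<open>y \<notin> U\<close> y have "y \<in> topspace X - X closure_of F" by blast
  then obtain V' where V': "openin X V'" "y \<in> V'" "X closure_of V' \<subseteq> topspace X - X closure_of F"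
    using regular_space_closure_of_subset[OF reg] by (metis closedin_closure_of openin_diff openin_topspace)
  then obtain F' where F': "F' \<in> \<mu>" "y \<in> F'" "F' \<subseteq> V'" using net unfolding network_of_def by blast
  have "X closure_of F \<inter> X closure_of F' = {}" using closure_of_mono[OF F'(3)] V'(3) by blast
  with F F' V V' point_in_closure show thesis by (intro that[of F F']) auto
qed

lemma exists_separating_covers:
  assumes reg: "regular_space X" and t1: "t1_space X"
    and net: "network_of X \<mu>" and sd: "sigma_discrete_in X \<mu>"
  shows "\<exists>G :: nat \<Rightarrow> 'a set set. (\<forall>n. open_cover_of X (G n)) \<and>
    (\<forall>x\<in>topspace X. \<forall>y\<in>topspace X. x \<noteq> y \<longrightarrow> (\<exists>n. \<forall>U\<in>G n. x \<in> U \<longrightarrow> y \<notin> U))"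
proof -
  obtain f :: "nat \<Rightarrow> 'a set set" where f: "\<And>n. discrete_family_in X (f n)" "\<mu> = (\<Union>n. f n)"
    using sd unfolding sigma_discrete_in_def by blast
  define C where "C n = (\<lambda>A. X closure_of A) ` f n" for n
  have C_discrete: "discrete_family_in X (C n)" for n
    unfolding C_def by (rule discrete_family_in_closure[OF f(1)])
  have C_sub: "\<Union>(C n) \<subseteq> topspace X" for n using closure_of_subset_topspace by (fastforce simp: C_def)
  have C_closed: "A \<in> C n \<Longrightarrow> closedin X A" for A n by (auto simp: C_def)
  have C_lf: "locally_finite_in X (C n)" for n
    by (rule discrete_family_in_imp_locally_finite_in[OF C_discrete C_sub])
  text \<open>Pairs \<open>(n, k)\<close> of layers of the network are enumerated by \<open>prod_decode\<close>.\<close>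
  define G where "G m = separating_cover X (C (fst (prod_decode m))) (C (snd (prod_decode m)))" for m
  show ?thesis
  proof (intro exI[of _ G] conjI allI ballI impI)
    fix m show "open_cover_of X (G m)" unfolding G_def
      by (intro open_cover_of_separating_cover C_lf C_closed
          discrete_family_in_imp_pairwise_disjnt[OF C_discrete C_sub])
  next
    fix x y assume "x \<in> topspace X" "y \<in> topspace X" "x \<noteq> y"
    then obtain F F' where "F \<in> \<mu>" "F' \<in> \<mu>" "x \<in> X closure_of F" "y \<in> X closure_of F'"
      "X closure_of F \<inter> X closure_of F' = {}"
      by (rule regular_t1_network_separation[OF reg t1 net])
    then obtain n k where "X closure_of F \<in> C n" "X closure_of F' \<in> C k" using f(2) by (auto simp: C_def)
    then have "\<forall>U\<in>G (prod_encode (n, k)). x \<in> U \<longrightarrow> y \<notin> U"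
      unfolding G_def prod_encode_inverse fst_conv snd_conv
      by (metis separating_cover_separates \<open>x \<in> X closure_of F\<close> \<open>y \<in> X closure_of F'\<close>
          \<open>X closure_of F \<inter> X closure_of F' = {}\<close>)
    then show "\<exists>n. \<forall>U\<in>G n. x \<in> U \<longrightarrow> y \<notin> U" by blast
  qed
qed

section \<open>Chains of pseudometric refinements\<close>

definition cover_meet :: "'a set set \<Rightarrow> 'a set set \<Rightarrow> 'a set set" where
  "cover_meet \<A> \<B> = {A \<inter> B | A B. A \<in> \<A> \<and> B \<in> \<B>}"

lemma open_cover_of_cover_meet:
  assumes "open_cover_of X \<A>" "open_cover_of X \<B>"
  shows "open_cover_of X (cover_meet \<A> \<B>)"
proof -
  have "topspace X \<subseteq> \<Union>(cover_meet \<A> \<B>)"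
  proof
    fix x assume "x \<in> topspace X"
    then obtain A B where "A \<in> \<A>" "B \<in> \<B>" "x \<in> A" "x \<in> B"
      using assms unfolding open_cover_of_def by blast
    then show "x \<in> \<Union>(cover_meet \<A> \<B>)" unfolding cover_meet_def by blast
  qed
  with assms show ?thesis unfolding open_cover_of_def cover_meet_def by blast
qed

lemma refines_cover_meet: "refines (cover_meet \<A> \<B>) \<A>" "refines (cover_meet \<A> \<B>) \<B>"
  unfolding cover_meet_def refines_def by blast+

lemma exists_pseudometric_refinement_chain:
  assumes par: "paracompact_space X" and reg: "regular_space X" and L: "\<And>i. open_cover_of X (L i)"
  shows "\<exists>\<omega> d. (\<forall>i. pseudometric_refinement X (L i) (\<omega> i) (d i)) \<and> (\<forall>i. refines (\<omega> (Suc i)) (\<omega> i))"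
proof -
  have "\<forall>\<U>. \<exists>R. open_cover_of X \<U> \<longrightarrow> pseudometric_refinement X \<U> (fst R) (snd R)"
    using exists_pseudometric_refinement[OF par reg] by (metis fst_conv snd_conv)
  then obtain R where R: "\<And>\<U>. open_cover_of X \<U> \<Longrightarrow> pseudometric_refinement X \<U> (fst (R \<U>)) (snd (R \<U>))"
    by metis
  define seq where "seq = rec_nat (R (L 0)) (\<lambda>i s. R (cover_meet (fst s) (L (Suc i))))"
  have step: "seq (Suc i) = R (cover_meet (fst (seq i)) (L (Suc i)))" for i by (simp add: seq_def)
  have seq: "pseudometric_refinement X (L i) (fst (seq i)) (snd (seq i))" for i
  proof (induction i)
    case 0
    then show ?case using R[OF L] by (simp add: seq_def)
  next
    case (Suc i)
    then have "open_cover_of X (fst (seq i))" by (simp add: pseudometric_refinement_def)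
    then have "pseudometric_refinement X (cover_meet (fst (seq i)) (L (Suc i))) (fst (seq (Suc i))) (snd (seq (Suc i)))"
      unfolding step by (intro R open_cover_of_cover_meet L)
    then show ?case
      using refines_cover_meet(2) refines_trans unfolding pseudometric_refinement_def by blast
  qed
  have "refines (fst (seq (Suc i))) (fst (seq i))" for i
  proof -
    have "open_cover_of X (fst (seq i))" using seq by (simp add: pseudometric_refinement_def)
    then have "refines (fst (seq (Suc i))) (cover_meet (fst (seq i)) (L (Suc i)))"
      using R[OF open_cover_of_cover_meet[OF _ L]] unfolding step pseudometric_refinement_def by blast
    then show ?thesis using refines_cover_meet(1) refines_trans by blast
  qed
  with seq show ?thesis by (intro exI[of _ "fst \<circ> seq"] exI[of _ "snd \<circ> seq"]) simp
qed

lemma exists_separating_pseudometrics: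
  assumes par: "paracompact_space X" and "sigma_space X"
  shows "\<exists>q :: nat \<Rightarrow> 'a \<Rightarrow> 'a \<Rightarrow> real. (\<forall>n. continuous_pseudometric X (q n)) \<and>
    (\<forall>x\<in>topspace X. \<forall>y\<in>topspace X. x \<noteq> y \<longrightarrow> (\<exists>n. 0 < q n x y))"
proof -
  obtain \<mu> where reg: "regular_space X" and t1: "t1_space X"
    and net: "network_of X \<mu>" and sd: "sigma_discrete_in X \<mu>"
    using assms(2) unfolding sigma_space_def by blast
  obtain G :: "nat \<Rightarrow> 'a set set" where G: "\<forall>n. open_cover_of X (G n)"
    and Gsep: "\<forall>x\<in>topspace X. \<forall>y\<in>topspace X. x \<noteq> y \<longrightarrow> (\<exists>n. \<forall>U\<in>G n. x \<in> U \<longrightarrow> y \<notin> U)"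
    using exists_separating_covers[OF reg t1 net sd] by auto
  obtain \<W> q where \<W>: "\<forall>n. pseudometric_refinement X (G n) (\<W> n) (q n)"
    using exists_pseudometric_refinement_chain[of X G, OF par reg G[rule_format]] by blast
  have sep: "\<exists>n. 0 < q n x y" if xy: "x \<in> topspace X" "y \<in> topspace X" "x \<noteq> y" for x y
  proof -
    obtain n where "\<forall>U\<in>G n. x \<in> U \<longrightarrow> y \<notin> U" using Gsep[rule_format, OF xy] by blast
    then have "0 < q n x y"
      using pseudometric_refinement_separates[OF \<W>[rule_format, of n] xy(1,2)] by blast
    then show ?thesis by blast
  qed
  show ?thesis
  proof (intro exI[of _ q] conjI allI ballI impI)
    fix n show "continuous_pseudometric X (q n)" using \<W> by (simp add: pseudometric_refinement_def)
  next
    fix x y assume "x \<in> topspace X" "y \<in> topspace X" "x \<noteq> y"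
    then show "\<exists>n. 0 < q n x y" by (rule sep)
  qed
qed

section \<open>Weighted suprema of pseudometrics\<close>

lemma pseudometric_le1_divide:
  assumes "pseudometric_le1 p" "1 \<le> c"
  shows "pseudometric_le1 (\<lambda>x y. p x y / c)"
  using assms unfolding pseudometric_le1_def
  by (auto simp: pos_divide_le_eq divide_right_mono add_divide_distrib[symmetric] intro: order_trans)

definition weighted_sup :: "(nat \<Rightarrow> 'a \<Rightarrow> 'a \<Rightarrow> real) \<Rightarrow> 'a \<Rightarrow> 'a \<Rightarrow> real" where
  "weighted_sup p = sup_family (\<lambda>j x y. p j x y / 2^j) UNIV"

lemma pseudometric_le1_weighted_sup:
  "(\<And>j. pseudometric_le1 (p j)) \<Longrightarrow> pseudometric_le1 (weighted_sup p)"
  unfolding weighted_sup_def by (intro pseudometric_le1_sup_family pseudometric_le1_divide) auto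

lemma weighted_sup_dominates:
  assumes "\<And>j. pseudometric_le1 (p j)"
  shows "p j x y \<le> 2^j * weighted_sup p x y"
proof -
  have "p j x y / 2^j \<le> 1" for j
    using assms[of j] pseudometric_le1_divide[OF assms[of j], of "2^j"]
    unfolding pseudometric_le1_def by simp
  then have "p j x y / 2^j \<le> weighted_sup p x y"
    unfolding weighted_sup_def by (intro sup_family_upper) auto
  then show ?thesis by (simp add: divide_le_eq mult.commute)
qed

lemma continuous_pseudometric_weighted_sup:
  assumes p: "\<And>j. continuous_pseudometric X (p j)"
  shows "continuous_pseudometric X (weighted_sup p)"
  unfolding continuous_pseudometric_def
proof (intro conjI ballI allI impI)
  have le1: "pseudometric_le1 (p j)" for j using p by (simp add: continuous_pseudometric_def)
  then show "pseudometric_le1 (weighted_sup p)" by (rule pseudometric_le1_weighted_sup)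
  fix x and e :: real
  assume x: "x \<in> topspace X" and e: "0 < e"
  obtain J :: nat where J: "(1/2) ^ J < e/2" using real_arch_pow_inv[of "e/2" "1/2"] e by auto
  obtain N where N: "openin X N" "x \<in> N" and close: "\<And>j z. j \<in> {..<J} \<Longrightarrow> z \<in> N \<Longrightarrow> p j x z < e/2"
    using finite_Ball_neighbourhood[OF finite_lessThan x, where P = "\<lambda>j z. p j x z < e/2"] p e
    unfolding continuous_pseudometric_def by (metis half_gt_zero x)
  show "\<exists>N. openin X N \<and> x \<in> N \<and> (\<forall>z\<in>N. weighted_sup p x z < e)"
  proof (intro exI conjI ballI)
    fix z assume z: "z \<in> N"
    have "p j x z / 2^j \<le> e/2" for j
    proof (cases "j < J")
      case True
      have "p j x z / 2^j \<le> p j x z / 1"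
        using le1[of j] by (intro divide_left_mono) (auto simp: pseudometric_le1_def)
      moreover have "p j x z < e/2" using close[of j z] True z by simp
      ultimately show ?thesis by linarith
    next
      case False
      have "p j x z / 2^j \<le> (1/2)^j"
        using le1[of j] by (simp add: pseudometric_le1_def power_one_over divide_right_mono)
      also have "\<dots> \<le> (1/2)^J" using False by (intro power_decreasing) auto
      finally show ?thesis using J by linarith
    qed
    then have "weighted_sup p x z \<le> e/2"
      unfolding weighted_sup_def using e by (intro sup_family_least) auto
    then show "weighted_sup p x z < e" using e by linarith
  qed (use N in auto)
qed

lemma Metric_space_weighted_sup:
  assumes p: "\<And>j. pseudometric_le1 (p j)"
    and sep: "\<And>x y. x \<in> S \<Longrightarrow> y \<in> S \<Longrightarrow> x \<noteq> y \<Longrightarrow> \<exists>j. 0 < p j x y"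
  shows "Metric_space S (weighted_sup p)"
proof
  have pm: "pseudometric_le1 (weighted_sup p)" by (rule pseudometric_le1_weighted_sup[OF p])
  fix x y z
  show "0 \<le> weighted_sup p x y" "weighted_sup p x y = weighted_sup p y x"
    "weighted_sup p x z \<le> weighted_sup p x y + weighted_sup p y z"
    using pm unfolding pseudometric_le1_def by blast+
  assume "x \<in> S" "y \<in> S"
  show "weighted_sup p x y = 0 \<longleftrightarrow> x = y"
  proof
    assume "weighted_sup p x y = 0"
    then have "p j x y \<le> 0" for j using weighted_sup_dominates[of p, OF p, of j x y] by simp
    then show "x = y" using sep[OF \<open>x \<in> S\<close> \<open>y \<in> S\<close>] by (meson linorder_not_le)
  qed (use pm in \<open>simp add: pseudometric_le1_def\<close>)
qed

context Metric_space
begin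

lemma continuous_map_id_mtopology:
  assumes "topspace X \<subseteq> M" "continuous_pseudometric X d"
  shows "continuous_map X mtopology id"
  unfolding continuous_map_to_metric
proof (intro ballI allI impI)
  fix x and e :: real assume "x \<in> topspace X" "0 < e"
  then obtain N where "openin X N" "x \<in> N" "\<forall>z\<in>N. d x z < e"
    using assms(2) unfolding continuous_pseudometric_def by blast
  with assms(1) \<open>x \<in> topspace X\<close> show "\<exists>U. openin X U \<and> x \<in> U \<and> (\<forall>y\<in>U. id y \<in> mball (id x) e)"
    by (intro exI[of _ N]) (auto dest: openin_subset)
qed

lemma openin_mtopology_if_pseudo_open_in:
  assumes C: "C > 0" and dom: "\<And>x y. x \<in> M \<Longrightarrow> y \<in> M \<Longrightarrow> p x y \<le> C * d x y"
    and "W \<subseteq> M" "pseudo_open_in M p W"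
  shows "openin mtopology W"
  unfolding openin_mtopology
proof (intro conjI allI impI)
  fix x assume "x \<in> W"
  then obtain r where "r > 0" and r: "\<forall>y\<in>M. p x y < r \<longrightarrow> y \<in> W"
    using assms(4) unfolding pseudo_open_in_def by blast
  have "mball x (r / C) \<subseteq> W"
  proof
    fix y assume "y \<in> mball x (r / C)"
    then have "y \<in> M" "p x y < r" using dom[of x y] C by (auto simp: pos_less_divide_eq mult.commute)
    then show "y \<in> W" using r by blast
  qed
  then show "\<exists>r>0. mball x r \<subseteq> W" using \<open>r > 0\<close> C by (intro exI[of _ "r / C"]) auto
qed (use assms in simp)

lemma locally_finite_in_mtopology_if_pseudo_locally_finite_in:
  assumes C: "C > 0" and dom: "\<And>x y. x \<in> M \<Longrightarrow> y \<in> M \<Longrightarrow> p x y \<le> C * d x y"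
    and "\<Union>\<W> \<subseteq> M" "pseudo_locally_finite_in M p \<W>"
  shows "locally_finite_in mtopology \<W>"
  unfolding locally_finite_in_def
proof (intro conjI ballI)
  fix x assume "x \<in> topspace mtopology"
  then have x: "x \<in> M" by simp
  then obtain r where "r > 0" and fin: "finite {W\<in>\<W>. \<exists>y\<in>M. p x y < r \<and> y \<in> W}"
    using assms(4) unfolding pseudo_locally_finite_in_def by blast
  have "{W\<in>\<W>. W \<inter> mball x (r / C) \<noteq> {}} \<subseteq> {W\<in>\<W>. \<exists>y\<in>M. p x y < r \<and> y \<in> W}"
  proof
    fix W assume "W \<in> {W\<in>\<W>. W \<inter> mball x (r / C) \<noteq> {}}"
    then obtain y where "W \<in> \<W>" "y \<in> W" "y \<in> mball x (r / C)" by blast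
    moreover from this(3) have "y \<in> M" "p x y < r"
      using dom[of x y] C by (auto simp: pos_less_divide_eq mult.commute)
    ultimately show "W \<in> {W\<in>\<W>. \<exists>y\<in>M. p x y < r \<and> y \<in> W}" by blast
  qed
  then have "finite {W\<in>\<W>. W \<inter> mball x (r / C) \<noteq> {}}" using fin by (rule finite_subset)
  moreover have "x \<in> mball x (r / C)" using x \<open>r > 0\<close> C by simp
  ultimately show "\<exists>V. openin mtopology V \<and> x \<in> V \<and> finite {W\<in>\<W>. W \<inter> V \<noteq> {}}"
    using openin_mball by blast
qed (use assms in simp)

end

lemma (in Metric_space) pseudometric_refinement_mtopology:
  assumes \<W>: "pseudometric_refinement X \<U> \<W> p" and M: "M = topspace X"
    and C: "C > 0" and dom: "\<And>x y. x \<in> M \<Longrightarrow> y \<in> M \<Longrightarrow> p x y \<le> C * d x y"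
  shows "open_cover_of mtopology \<W>" "locally_finite_in mtopology \<W>"
proof -
  have cover: "\<Union>\<W> = M" and open_\<W>: "\<forall>W\<in>\<W>. pseudo_open_in M p W"
    and lf: "pseudo_locally_finite_in M p \<W>"
    using \<W> M unfolding pseudometric_refinement_def open_cover_of_def by auto
  have "openin mtopology W" if "W \<in> \<W>" for W
    using that cover open_\<W> by (intro openin_mtopology_if_pseudo_open_in[OF C dom]) auto
  with cover show "open_cover_of mtopology \<W>" unfolding open_cover_of_def by simp
  show "locally_finite_in mtopology \<W>"
    using cover lf by (intro locally_finite_in_mtopology_if_pseudo_locally_finite_in[OF C dom]) auto
qed

theorem mainTheorem9:
  fixes X :: "'a topology" and L :: "nat \<Rightarrow> 'a set set"
  assumes "paracompact_space X" and "sigma_space X"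
    and "\<And>i. open_cover_of X (L i) \<and> locally_finite_in X (L i)"
    and "\<And>i. refines (L (Suc i)) (L i)"
  shows "\<exists>(\<omega> :: nat \<Rightarrow> 'a set set) (m :: 'a metric) (\<psi> :: 'a \<Rightarrow> 'a).
           (\<forall>i. open_cover_of X (\<omega> i) \<and> locally_finite_in X (\<omega> i) \<and> refines (\<omega> i) (L i)
                \<and> refines (\<omega> (Suc i)) (\<omega> i)) \<and>
           continuous_map X (mtopology_of m) \<psi> \<and>
           bij_betw \<psi> (topspace X) (mspace m) \<and>
           (\<forall>i. open_cover_of (mtopology_of m) ((`) \<psi> ` \<omega> i) \<and>
                locally_finite_in (mtopology_of m) ((`) \<psi> ` \<omega> i))"
proof -
  have reg: "regular_space X" using assms(2) unfolding sigma_space_def by blast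
  have L: "\<And>i. open_cover_of X (L i)" using assms(3) by blast
  obtain \<omega> d where \<omega>: "\<forall>i. pseudometric_refinement X (L i) (\<omega> i) (d i)"
    and \<omega>_chain: "\<forall>i. refines (\<omega> (Suc i)) (\<omega> i)"
    using exists_pseudometric_refinement_chain[of X L, OF assms(1) reg L] by blast
  obtain q :: "nat \<Rightarrow> 'a \<Rightarrow> 'a \<Rightarrow> real" where q: "\<forall>n. continuous_pseudometric X (q n)"
    and q_sep: "\<forall>x\<in>topspace X. \<forall>y\<in>topspace X. x \<noteq> y \<longrightarrow> (\<exists>n. 0 < q n x y)"
    using exists_separating_pseudometrics[OF assms(1,2)] by blast
  define p where "p j = (if even j then d (j div 2) else q (j div 2))" for j :: nat
  have p_cont: "continuous_pseudometric X (p j)" for j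
    using \<omega> q by (simp add: p_def pseudometric_refinement_def)
  then have le1: "pseudometric_le1 (p j)" for j by (simp add: continuous_pseudometric_def)
  have "\<exists>j. 0 < p j x y" if xy: "x \<in> topspace X" "y \<in> topspace X" "x \<noteq> y" for x y
  proof -
    obtain n where "0 < q n x y" using q_sep xy by blast
    moreover have "p (2 * n + 1) = q n" by (simp add: p_def)
    ultimately show ?thesis by metis
  qed
  then interpret Z: Metric_space "topspace X" "weighted_sup p"
    by (rule Metric_space_weighted_sup[of p, OF le1])
  have "d i x y \<le> 2^(2*i) * weighted_sup p x y" for i x y
    using weighted_sup_dominates[of p, OF le1, of "2*i"] by (simp add: p_def)
  then have "open_cover_of Z.mtopology (\<omega> i) \<and> locally_finite_in Z.mtopology (\<omega> i)" for i
    using Z.pseudometric_refinement_mtopology[OF \<omega>[rule_format, of i], of "2^(2*i)"] by simp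
  moreover have "continuous_map X Z.mtopology id"
    by (intro Z.continuous_map_id_mtopology continuous_pseudometric_weighted_sup p_cont) simp
  ultimately show ?thesis
    using \<omega> \<omega>_chain unfolding pseudometric_refinement_def
    by (intro exI[of _ \<omega>] exI[of _ "metric (topspace X, weighted_sup p)"] exI[of _ id]) simp
qed

end
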